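(* $R_5(VS)>180$ and $R_6(VS)>333$: there is a 5-coloring of $[180]$ and a 6-coloring of $[333]$ in each of which no two integers of the same color differ by a positive perfect square.
   Context: For $n\in\mathbb{N}$, $[n]=\{1,\dots,n\}$; a $c$-coloring of $[n]$ is a function $[n]\to[c]$. $R_c(VS)$ (the van der Square number) is the least positive integer $n$ such that every $c$-coloring of $[n]$ contains integers $a<b$ in $[n]$ of the same color with $b-a=x^2$ for some positive integer $x$. *)

theory Defs
  imports Main
begin

definition is_coloring :: "nat \<Rightarrow> nat \<Rightarrow> (nat \<Rightarrow> nat) \<Rightarrow> bool" where
  "is_coloring c n f \<longleftrightarrow> (\<forall>a\<in>{1..n}. f a \<in> {1..c})"

definition square_diff_free :: "nat \<Rightarrow> (nat \<Rightarrow> nat) \<Rightarrow> bool" where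
  "square_diff_free n f \<longleftrightarrow>
     (\<forall>a\<in>{1..n}. \<forall>b\<in>{1..n}. a < b \<longrightarrow> f a = f b \<longrightarrow> \<not> (\<exists>x::nat. x > 0 \<and> b - a = x ^ 2))"

end

theory Submission
  imports Defs
begin

text \<open>The colorings are explicit lists found by computer search. In a list of
  length at most m^2 every positive square difference is x^2 with 0 < x < m, so it
  suffices that no two entries at these finitely many distances agree; this is
  checked by symbolic evaluation.\<close>

definition coloring_of_list :: "nat list \<Rightarrow> nat \<Rightarrow> nat" where
  "coloring_of_list xs a = xs ! (a - 1)"

definition distinct_at_distance :: "nat \<Rightarrow> nat list \<Rightarrow> bool" where
  "distinct_at_distance d xs \<longleftrightarrow> (\<forall>i. i + d < length xs \<longrightarrow> xs ! i \<noteq> xs ! (i + d))"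

lemma distinct_at_distance_code [code]:
  "distinct_at_distance d xs \<longleftrightarrow> list_all (\<lambda>(u, v). u \<noteq> v) (zip xs (drop d xs))"
  unfolding distinct_at_distance_def by (auto simp: list_all_length nth_zip add.commute)

lemma is_coloring_of_list:
  assumes "set xs \<subseteq> {1..k}"
  shows "is_coloring k (length xs) (coloring_of_list xs)"
  unfolding is_coloring_def coloring_of_list_def
proof
  fix a assume "a \<in> {1..length xs}"
  then have "a - 1 < length xs" by auto
  then show "xs ! (a - 1) \<in> {1..k}" using assms nth_mem by blast
qed

lemma square_diff_free_of_list:
  assumes "length xs \<le> m\<^sup>2" and "\<forall>x\<in>{1..<m}. distinct_at_distance (x\<^sup>2) xs"
  shows "square_diff_free (length xs) (coloring_of_list xs)"
  unfolding square_diff_free_def coloring_of_list_def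
proof (intro ballI impI notI)
  fix a b assume a: "a \<in> {1..length xs}" and b: "b \<in> {1..length xs}" and "a < b"
    and same: "xs ! (a - 1) = xs ! (b - 1)" and "\<exists>x::nat. x > 0 \<and> b - a = x\<^sup>2"
  then obtain x :: nat where "x > 0" and gap: "b - a = x\<^sup>2" by blast
  have "x\<^sup>2 < m\<^sup>2" using gap a b assms(1) by simp linarith
  then have "x < m" by (rule power_less_imp_less_base) simp
  with \<open>x > 0\<close> have "distinct_at_distance (x\<^sup>2) xs" using assms(2) by simp
  moreover have "a - 1 + x\<^sup>2 = b - 1" and "b - 1 < length xs"
    using gap a b \<open>a < b\<close> by auto
  ultimately show False using same unfolding distinct_at_distance_def by metis
qed

lemma exists_square_diff_free_coloring:
  assumes "length xs = n" and "n \<le> m\<^sup>2" and "set xs \<subseteq> {1..k}"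
    and "\<forall>x\<in>{1..<m}. distinct_at_distance (x\<^sup>2) xs"
  shows "\<exists>f. is_coloring k n f \<and> square_diff_free n f"
proof (intro exI conjI)
  show "is_coloring k n (coloring_of_list xs)"
    using is_coloring_of_list[OF assms(3)] assms(1) by simp
  show "square_diff_free n (coloring_of_list xs)"
    using square_diff_free_of_list[OF assms(2,4)[folded assms(1)]] assms(1) by simp
qed

definition coloring_5_180 :: "nat list" where
  "coloring_5_180 =
    [2,3,2,1,3,1,3,4,2,4,1,5,3,2,3,4,1,5,1,2,4,2,5,1,5,3,4,3,4,1,
     5,1,2,3,2,5,1,5,3,4,2,4,1,5,1,2,4,2,5,1,5,3,4,2,4,1,5,1,2,4,
     2,5,1,5,3,4,3,4,1,5,1,2,4,2,5,1,5,3,4,2,4,1,5,1,2,4,2,5,1,5,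
     3,4,2,4,1,5,1,2,4,2,5,1,5,3,4,3,4,1,5,1,2,4,2,5,1,5,3,4,2,4,
     1,5,1,3,4,2,5,1,5,3,2,3,4,1,5,1,3,4,2,5,1,5,3,4,3,4,1,5,1,2,
     4,2,5,1,5,3,4,3,4,1,5,1,3,4,2,5,1,5,3,4,2,4,2,5,3,2,3,4,5,3]"

definition coloring_6_333 :: "nat list" where
  "coloring_6_333 =
    [6,3,2,3,5,2,3,6,4,5,4,5,6,4,5,6,5,6,3,1,4,5,1,3,1,4,5,1,4,2,
     6,4,2,3,1,6,3,1,5,1,2,3,2,4,5,6,3,2,4,5,2,1,6,2,1,4,5,6,4,5,
     4,5,6,3,2,4,5,6,3,1,4,5,1,3,2,6,3,2,3,5,6,3,4,3,1,2,3,2,4,5,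
     6,3,2,4,5,2,1,6,2,1,4,5,1,4,1,4,5,1,6,2,6,4,5,3,1,3,2,1,6,2,
     6,3,2,4,2,6,3,2,3,5,2,1,6,4,5,4,5,2,4,5,4,1,6,3,1,4,5,6,3,1,
     4,5,1,6,2,6,3,5,3,1,6,3,1,5,1,6,3,2,4,5,6,3,2,4,5,2,1,6,4,1,
     4,5,2,4,5,4,1,6,3,2,4,5,6,3,1,4,5,1,6,2,6,3,2,3,5,6,3,4,3,1,
     2,3,2,4,5,6,3,2,4,5,2,1,6,2,1,4,5,1,4,1,4,5,1,6,2,6,4,5,3,1,
     3,2,1,6,2,6,3,2,4,5,6,3,2,3,5,2,1,6,4,5,4,5,2,4,5,4,5,6,3,1,
     4,5,6,3,1,4,5,1,6,2,6,3,1,3,1,6,3,1,5,1,6,3,2,4,3,6,3,2,4,5,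
     2,1,6,4,1,4,5,2,4,5,4,5,6,3,2,4,5,6,3,1,3,5,1,3,2,6,3,2,3,5,
     6,3,6]"

text \<open>The ranges are written as lists because code_simp cannot evaluate a bounded
  quantifier over an interval efficiently.\<close>

lemma coloring_5_180_valid:
  "length coloring_5_180 = 180 \<and> set coloring_5_180 \<subseteq> {1..5} \<and>
   (\<forall>x\<in>set [1..<14]. distinct_at_distance (x\<^sup>2) coloring_5_180)"
  unfolding coloring_5_180_def by code_simp

lemma coloring_6_333_valid:
  "length coloring_6_333 = 333 \<and> set coloring_6_333 \<subseteq> {1..6} \<and>
   (\<forall>x\<in>set [1..<19]. distinct_at_distance (x\<^sup>2) coloring_6_333)"
  unfolding coloring_6_333_def by code_simp

theorem mainTheorem6:
  shows "(\<exists>f. is_coloring 5 180 f \<and> square_diff_free 180 f) \<and>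
         (\<exists>f. is_coloring 6 333 f \<and> square_diff_free 333 f)"
proof
  show "\<exists>f. is_coloring 5 180 f \<and> square_diff_free 180 f"
    using coloring_5_180_valid by (intro exists_square_diff_free_coloring[where m = 14]) auto
  show "\<exists>f. is_coloring 6 333 f \<and> square_diff_free 333 f"
    using coloring_6_333_valid by (intro exists_square_diff_free_coloring[where m = 19]) auto
qed

end
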